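(* Let $V$ be a finite-dimensional real vector space with a non-degenerate symmetric bilinear form $\langle\cdot,\cdot\rangle$, and let $J:V\to V$ be linear, self-adjoint with respect to $\langle\cdot,\cdot\rangle$, with $J^2=-\operatorname{id}$. Let $V_+\subset V$ be a subspace on which $g:=\langle\cdot,\cdot\rangle|_{V_+}$ is positive definite, such that $V=V_+\oplus JV_+$ and $V_+\perp JV_+$. Let $T:V_+\to V_+$ be linear and set $\tilde V_+:=\{v+JTv: v\in V_+\}$. Then: (1) $\tilde V_+\perp J\tilde V_+$ if and only if $T$ is skew-adjoint with respect to $g$; (2) the restriction of $\langle\cdot,\cdot\rangle$ to $\tilde V_+$ is positive definite if and only if $|T|<1$, where $|T|$ denotes the operator norm of $T$ with respect to $g$. *)

theory Defs
  imports "HOL-Analysis.Analysis"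
begin

text \<open>A finite-dimensional real vector space is modelled by a type of class euclidean_space;
  only its vector-space structure is used, the form B is an arbitrary bilinear form.\<close>

definition symmetric_form :: "('a \<Rightarrow> 'a \<Rightarrow> real) \<Rightarrow> bool" where
  "symmetric_form B \<longleftrightarrow> (\<forall>x y. B x y = B y x)"

definition nondegenerate_form :: "('a::real_vector \<Rightarrow> 'a \<Rightarrow> real) \<Rightarrow> bool" where
  "nondegenerate_form B \<longleftrightarrow> (\<forall>x. (\<forall>y. B x y = 0) \<longrightarrow> x = 0)"

definition pos_def_on :: "('a \<Rightarrow> 'a \<Rightarrow> real) \<Rightarrow> 'a::real_vector set \<Rightarrow> bool" where
  "pos_def_on B W \<longleftrightarrow> (\<forall>v\<in>W. v \<noteq> 0 \<longrightarrow> B v v > 0)"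

definition orth_sets :: "('a \<Rightarrow> 'a \<Rightarrow> real) \<Rightarrow> 'a set \<Rightarrow> 'a set \<Rightarrow> bool" where
  "orth_sets B X Y \<longleftrightarrow> (\<forall>x\<in>X. \<forall>y\<in>Y. B x y = 0)"

definition linear_endo_on :: "'a::real_vector set \<Rightarrow> ('a \<Rightarrow> 'a) \<Rightarrow> bool" where
  "linear_endo_on W T \<longleftrightarrow> (\<forall>x\<in>W. T x \<in> W) \<and>
     (\<forall>x\<in>W. \<forall>y\<in>W. T (x + y) = T x + T y) \<and> (\<forall>c. \<forall>x\<in>W. T (c *\<^sub>R x) = c *\<^sub>R T x)"

text \<open>Operator norm of T on W with respect to the inner product g = B restricted to W
  (taken to be 0 if W is trivial).\<close>
definition op_norm_on :: "('a \<Rightarrow> 'a \<Rightarrow> real) \<Rightarrow> 'a::real_vector set \<Rightarrow> ('a \<Rightarrow> 'a) \<Rightarrow> real" where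
  "op_norm_on B W T = Sup ({0} \<union> {sqrt (B (T v) (T v)) | v. v \<in> W \<and> B v v = 1})"

end

theory Submission imports Defs begin

text \<open>
  For v, v' in V+ the relations J^2 = -id, <Jx, y> = <x, Jy> and V+ orthogonal to JV+ give
  <v + JTv, J(v' + JTv')> = -(g(v, Tv') + g(Tv, v')) and <v + JTv, v + JTv> = g(v, v) - g(Tv, Tv).
  The first identity is exactly (1). By the second, and since v |-> v + JTv is injective on V+,
  (2) amounts to g(Tv, Tv) < g(v, v) for all v /= 0, and this is equivalent to |T| < 1 because
  the ratio g(Tv, Tv) / g(v, v) attains its maximum on the compact unit sphere of V+.
\<close>

lemma bilinear_scaleR_scaleR:
  assumes "bilinear B"
  shows "B (c *\<^sub>R x) (c *\<^sub>R y) = c * c * B x y"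
  using bilinear_lmul[OF assms] bilinear_rmul[OF assms] by simp

lemma linear_endo_on_0:
  assumes "subspace W" "linear_endo_on W T"
  shows "T 0 = 0"
  using assms unfolding linear_endo_on_def by (metis scale_zero_left subspace_0)

lemma linear_endo_on_extends_to_linear:
  fixes T :: "'a::real_vector \<Rightarrow> 'a"
  assumes W: "subspace W" and T: "linear_endo_on W T"
  shows "\<exists>L. linear L \<and> (\<forall>x\<in>W. L x = T x)"
proof -
  obtain Bs where Bs: "Bs \<subseteq> W" "independent Bs" "W \<subseteq> span Bs"
    using maximal_independent_subset by blast
  obtain L where L: "linear L" "\<forall>x\<in>Bs. L x = T x"
    using linear_independent_extend[OF Bs(2)] by blast
  have "x \<in> W \<and> L x = T x" if "x \<in> span Bs" for x
    using that
  proof (induct rule: span_induct)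
    case step
    then show ?case using L Bs by auto
  next
    case base
    show ?case unfolding subspace_def
      using W T linear_endo_on_0[OF W T] L(1) unfolding linear_endo_on_def
      by (auto simp: subspace_add subspace_mul subspace_0 linear_add linear_scale linear_0)
  qed
  then show ?thesis using L Bs by blast
qed

lemma linear_form_ratio_attains_max:
  fixes B :: "'a::euclidean_space \<Rightarrow> 'a \<Rightarrow> real"
  assumes B: "bilinear B" and pd: "pos_def_on B W" and W: "subspace W" and L: "linear L"
    and nontrivial: "W \<noteq> {0}"
  shows "\<exists>u\<in>W. u \<noteq> 0 \<and> (\<forall>v\<in>W. B (L v) (L v) * B u u \<le> B (L u) (L u) * B v v)"
proof -
  define K where "K = W \<inter> sphere 0 1"
  define ratio where "ratio u = B (L u) (L u) / B u u" for u
  have K: "compact K"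
    unfolding K_def using closed_Int_compact[OF closed_subspace[OF W] compact_sphere] by simp
  have normalize: "(1 / norm v) *\<^sub>R v \<in> K" if "v \<in> W" "v \<noteq> 0" for v
    unfolding K_def using that W by (simp add: subspace_mul)
  obtain w where "w \<in> W" "w \<noteq> 0" using nontrivial W subspace_0 by blast
  with normalize have "K \<noteq> {}" by blast
  have K_pos: "B u u > 0" if "u \<in> K" for u
    using that pd unfolding K_def pos_def_on_def by auto
  have bB: "bounded_bilinear B" using B bilinear_conv_bounded_bilinear by blast
  have "continuous_on K L"
    using L linear_conv_bounded_linear linear_continuous_on by blast
  then have "continuous_on K ratio"
    unfolding ratio_def using K_pos
    by (intro continuous_on_divide bounded_bilinear.continuous_on[OF bB] continuous_on_id)
      (auto, metis less_irrefl)
  then obtain u where u: "u \<in> K" "\<forall>y\<in>K. ratio y \<le> ratio u"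
    using continuous_attains_sup[OF K \<open>K \<noteq> {}\<close>] by blast
  have "B (L v) (L v) * B u u \<le> B (L u) (L u) * B v v" if v: "v \<in> W" for v
  proof (cases "v = 0")
    case True
    then show ?thesis using bilinear_lzero[OF B] linear_0[OF L] by simp
  next
    case False
    have "ratio v = ratio ((1 / norm v) *\<^sub>R v)"
      using False by (simp add: ratio_def linear_scale[OF L] bilinear_scaleR_scaleR[OF B])
    also have "\<dots> \<le> ratio u" using u normalize[OF v False] by blast
    finally show ?thesis
      using pd v False K_pos[OF u(1)] unfolding ratio_def pos_def_on_def
      by (simp add: divide_le_eq le_divide_eq mult.commute)
  qed
  moreover have "u \<in> W" "u \<noteq> 0" using u unfolding K_def by auto
  ultimately show ?thesis by blast
qed

lemma linear_endo_on_sharp_bound: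
  fixes B :: "'a::euclidean_space \<Rightarrow> 'a \<Rightarrow> real"
  assumes B: "bilinear B" and pd: "pos_def_on B W" and W: "subspace W" and T: "linear_endo_on W T"
  obtains M where "M \<ge> 0" "\<forall>v\<in>W. B (T v) (T v) \<le> M * B v v"
    "M = 0 \<or> (\<exists>u\<in>W. u \<noteq> 0 \<and> B (T u) (T u) = M * B u u)"
proof (cases "W = {0}")
  case True
  then show ?thesis
    using that[of 0] linear_endo_on_0[OF W T] bilinear_lzero[OF B] by auto
next
  case False
  obtain L where L: "linear L" "\<forall>x\<in>W. L x = T x"
    using linear_endo_on_extends_to_linear[OF W T] by blast
  obtain u where u: "u \<in> W" "u \<noteq> 0" "\<forall>v\<in>W. B (L v) (L v) * B u u \<le> B (L u) (L u) * B v v"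
    using linear_form_ratio_attains_max[OF B pd W L(1) False] by blast
  have u_pos: "B u u > 0" using pd u unfolding pos_def_on_def by blast
  have "B (T u) (T u) \<ge> 0"
    using pd u(1) T bilinear_lzero[OF B] unfolding pos_def_on_def linear_endo_on_def
    by (metis less_eq_real_def)
  with u_pos have "B (T u) (T u) / B u u \<ge> 0" by simp
  moreover have "\<forall>v\<in>W. B (T v) (T v) \<le> B (T u) (T u) / B u u * B v v"
    using u L(2) u_pos by (simp add: field_simps)
  moreover have "B (T u) (T u) = B (T u) (T u) / B u u * B u u" using u_pos by simp
  ultimately show ?thesis using that u by blast
qed

lemma op_norm_on_le:
  assumes "M \<ge> 0" "\<forall>v\<in>W. B (T v) (T v) \<le> M * B v v"
  shows "op_norm_on B W T \<le> sqrt M"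
  unfolding op_norm_on_def
proof (rule cSup_least)
  fix x assume "x \<in> {0} \<union> {sqrt (B (T v) (T v)) |v. v \<in> W \<and> B v v = 1}"
  then show "x \<le> sqrt M"
    using assms by (auto intro: real_sqrt_le_mono)
qed simp

lemma sqrt_form_ratio_le_op_norm_on:
  fixes B :: "'a::real_vector \<Rightarrow> 'a \<Rightarrow> real"
  assumes B: "bilinear B" and pd: "pos_def_on B W" and W: "subspace W" and T: "linear_endo_on W T"
    and bound: "\<forall>v\<in>W. B (T v) (T v) \<le> M * B v v"
    and v: "v \<in> W" "v \<noteq> 0"
  shows "sqrt (B (T v) (T v) / B v v) \<le> op_norm_on B W T"
proof -
  define S where "S = {0} \<union> {sqrt (B (T v) (T v)) | v. v \<in> W \<and> B v v = 1}"
  have "bdd_above S"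
  proof (rule bdd_aboveI)
    fix x assume "x \<in> S"
    then show "x \<le> sqrt \<bar>M\<bar>"
      using bound unfolding S_def by (auto intro!: real_sqrt_le_mono)
  qed
  have v_pos: "B v v > 0" using pd v unfolding pos_def_on_def by blast
  define c where "c = 1 / sqrt (B v v)"
  have cc: "c * c = 1 / B v v"
    unfolding c_def using v_pos by (simp add: real_sqrt_mult[symmetric])
  have "c *\<^sub>R v \<in> W" using v W by (simp add: subspace_mul)
  moreover have "B (c *\<^sub>R v) (c *\<^sub>R v) = 1"
    using bilinear_scaleR_scaleR[OF B] cc v_pos by simp
  moreover have "T (c *\<^sub>R v) = c *\<^sub>R T v" using T v unfolding linear_endo_on_def by blast
  ultimately have "sqrt (c * c * B (T v) (T v)) \<in> S"
    unfolding S_def by (auto simp: bilinear_scaleR_scaleR[OF B] intro!: exI[of _ "c *\<^sub>R v"])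
  then show ?thesis
    using cSup_upper[OF _ \<open>bdd_above S\<close>] unfolding op_norm_on_def S_def cc by simp
qed

lemma op_norm_on_less_one_iff:
  fixes B :: "'a::euclidean_space \<Rightarrow> 'a \<Rightarrow> real"
  assumes B: "bilinear B" and pd: "pos_def_on B W" and W: "subspace W" and T: "linear_endo_on W T"
  shows "op_norm_on B W T < 1 \<longleftrightarrow> (\<forall>v\<in>W. v \<noteq> 0 \<longrightarrow> B (T v) (T v) < B v v)"
proof -
  obtain M where M: "M \<ge> 0" "\<forall>v\<in>W. B (T v) (T v) \<le> M * B v v"
    "M = 0 \<or> (\<exists>u\<in>W. u \<noteq> 0 \<and> B (T u) (T u) = M * B u u)"
    using linear_endo_on_sharp_bound[OF B pd W T] by blast
  show ?thesis
  proof
    assume "op_norm_on B W T < 1"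
    then show "\<forall>v\<in>W. v \<noteq> 0 \<longrightarrow> B (T v) (T v) < B v v"
      using sqrt_form_ratio_le_op_norm_on[OF B pd W T M(2)] pd unfolding pos_def_on_def
      by (smt (verit) divide_less_eq_1_pos real_sqrt_lt_1_iff)
  next
    assume "\<forall>v\<in>W. v \<noteq> 0 \<longrightarrow> B (T v) (T v) < B v v"
    with M(3) pd have "M < 1" unfolding pos_def_on_def by force
    then show "op_norm_on B W T < 1"
      using op_norm_on_le[of M W B T] M(1,2) real_sqrt_lt_1_iff[of M] by linarith
  qed
qed

locale orthogonal_J_splitting =
  fixes B :: "'a::real_vector \<Rightarrow> 'a \<Rightarrow> real" and J :: "'a \<Rightarrow> 'a" and Vp :: "'a set"
  assumes bilinear: "bilinear B" and symmetric: "symmetric_form B"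
    and linear_J: "linear J" and J_self_adjoint: "\<And>x y. B (J x) y = B x (J y)"
    and J_J: "\<And>x. J (J x) = - x"
    and subspace: "subspace Vp" and orth: "orth_sets B Vp (J ` Vp)"
    and direct: "Vp \<inter> J ` Vp = {0}"
begin

lemma form_J_J: "B (J x) (J y) = - B x y"
  using J_self_adjoint J_J bilinear_rneg[OF bilinear] by metis

lemma form_J_orth:
  assumes "p \<in> Vp" "q \<in> Vp"
  shows "B p (J q) = 0" and "B (J q) p = 0"
proof -
  show *: "B p (J q) = 0" using orth assms unfolding orth_sets_def by blast
  show "B (J q) p = 0" using * symmetric unfolding symmetric_form_def by metis
qed

lemma graph_pairing:
  assumes "p \<in> Vp" "q \<in> Vp" "p' \<in> Vp" "q' \<in> Vp"
  shows "B (p + J q) (J (p' + J q')) = - (B p q' + B q p')"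
proof -
  have "J (p' + J q') = J p' + - q'" using J_J linear_add[OF linear_J] by simp
  then show ?thesis
    using form_J_orth[OF assms(1,3)] form_J_orth[OF assms(4,2)] form_J_J[of q p']
    by (simp add: bilinear_ladd[OF bilinear] bilinear_radd[OF bilinear]
        bilinear_rsub[OF bilinear])
qed

lemma graph_square:
  assumes "p \<in> Vp" "q \<in> Vp"
  shows "B (p + J q) (p + J q) = B p p - B q q"
  using form_J_orth[OF assms] form_J_J[of q q]
  by (simp add: bilinear_ladd[OF bilinear] bilinear_radd[OF bilinear])

lemma graph_eq_0:
  assumes "p \<in> Vp" "q \<in> Vp" "p + J q = 0"
  shows "p = 0"
proof -
  have "p = J (- q)" using assms(3) linear_neg[OF linear_J] by (simp add: add_eq_0_iff)
  moreover have "- q \<in> Vp" using assms(2) subspace by (simp add: subspace_neg)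
  ultimately show ?thesis using assms(1) direct by blast
qed

lemma graph_orth_iff_skew_adjoint:
  assumes T: "linear_endo_on Vp T"
  shows "orth_sets B ((\<lambda>v. v + J (T v)) ` Vp) (J ` (\<lambda>v. v + J (T v)) ` Vp)
    \<longleftrightarrow> (\<forall>u\<in>Vp. \<forall>v\<in>Vp. B (T u) v = - B u (T v))"
proof -
  have TV: "\<And>v. v \<in> Vp \<Longrightarrow> T v \<in> Vp" using T unfolding linear_endo_on_def by blast
  have "B (u + J (T u)) (J (v + J (T v))) = 0 \<longleftrightarrow> B (T u) v = - B u (T v)"
    if "u \<in> Vp" "v \<in> Vp" for u v
    using graph_pairing[OF that(1) TV[OF that(1)] that(2) TV[OF that(2)]] by linarith
  then show ?thesis unfolding orth_sets_def by auto
qed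

lemma graph_pos_def_iff:
  assumes T: "linear_endo_on Vp T"
  shows "pos_def_on B ((\<lambda>v. v + J (T v)) ` Vp) \<longleftrightarrow> (\<forall>v\<in>Vp. v \<noteq> 0 \<longrightarrow> B (T v) (T v) < B v v)"
proof -
  have TV: "\<And>v. v \<in> Vp \<Longrightarrow> T v \<in> Vp" using T unfolding linear_endo_on_def by blast
  have "v + J (T v) \<noteq> 0 \<longleftrightarrow> v \<noteq> 0" if "v \<in> Vp" for v
    using graph_eq_0[OF that TV[OF that]] linear_endo_on_0[OF subspace T] linear_0[OF linear_J]
    by auto
  then show ?thesis
    unfolding pos_def_on_def using graph_square TV by auto
qed

end

theorem lemma9:
  fixes B :: "'a::euclidean_space \<Rightarrow> 'a \<Rightarrow> real"
    and J T :: "'a \<Rightarrow> 'a"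
    and Vp :: "'a set"
  assumes "bilinear B" and "symmetric_form B" and "nondegenerate_form B"
    and "linear J" and "\<forall>x y. B (J x) y = B x (J y)" and "\<forall>x. J (J x) = - x"
    and "subspace Vp" and "pos_def_on B Vp"
    and "{x + y | x y. x \<in> Vp \<and> y \<in> J ` Vp} = UNIV" and "Vp \<inter> J ` Vp = {0}"
    and "orth_sets B Vp (J ` Vp)"
    and "linear_endo_on Vp T"
  shows "(orth_sets B ((\<lambda>v. v + J (T v)) ` Vp) (J ` ((\<lambda>v. v + J (T v)) ` Vp))
           \<longleftrightarrow> (\<forall>u\<in>Vp. \<forall>v\<in>Vp. B (T u) v = - B u (T v)))
         \<and> (pos_def_on B ((\<lambda>v. v + J (T v)) ` Vp) \<longleftrightarrow> op_norm_on B Vp T < 1)"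
proof -
  interpret orthogonal_J_splitting B J Vp
    using assms by (simp add: orthogonal_J_splitting_def)
  show ?thesis
    using graph_orth_iff_skew_adjoint[OF assms(12)] graph_pos_def_iff[OF assms(12)]
      op_norm_on_less_one_iff[OF assms(1,8,7,12)]
    by simp
qed

end
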